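(* Suppose $\mathcal{G}_k\equiv\mathcal{G}_*$ for all $k$, for a fixed digraph $\mathcal{G}_*$ on $\mathcal{V}=\{1,\dots,n\}$. (i) For every algorithm in $\mathcal{A}_{\rm ave}$, if global asymptotic consensus is achieved then $\mathcal{G}_*$ is quasi-strongly connected. (ii) For the algorithm in $\mathcal{A}_{\rm max}$, global finite-time consensus is achieved if and only if $\mathcal{G}_*$ is strongly connected.
   Context: Network of nodes $\mathcal{V}=\{1,\dots,n\}$, $n\ge 3$, discrete time, states $x_i(k)\in\mathbb{R}$. At each time $k$ a digraph $\mathcal{G}_k=(\mathcal{V},\mathcal{E}_k)$ is given; $j$ is a neighbor of $i$ at time $k$ if $(j,i)\in\mathcal{E}_k$, every node is always its own neighbor; $\mathcal{N}_i(k)$ is the neighbor set. The algorithm is $$x_i(k+1)=\eta_k x_i(k)+\alpha_k\min_{j\in\mathcal{N}_i(k)}x_j(k)+(1-\eta_k-\alpha_k)\max_{j\in\mathcal{N}_i(k)}x_j(k),$$ with node-independent parameters $\eta_k\ge0,\alpha_k\ge0,\eta_k+\alpha_k\le1$. $\mathcal{A}_{\rm ave}$: $\eta_k\in(0,1]$, $\alpha_k\in[0,1-\eta_k]$ for all $k$. $\mathcal{A}_{\rm max}$: $\eta_k=\alpha_k=0$ for all $k$ (i.e. $x_i(k+1)=\max_{j\in\mathcal{N}_i(k)}x_j(k)$). The iteration starts at time $k_0$ with $x(k_0)=x^0$. Asymptotic consensus: there is $z_*$ with $x_i(k)\to z_*$ for all $i$; finite-time consensus: there are $z_*$ and an integer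 $T_*$ with $x_i(T_* )=z_*$ for all $i$; "global" means for all $k_0\ge0$ and all $x^0\in\mathbb{R}^n$. A node $j$ is reachable from $i$ if there is a directed path from $i$ to $j$ (each node is reachable from itself). A digraph is strongly connected if every node is reachable from every other node, and quasi-strongly connected if it has a center, i.e. a node from which every node is reachable. *)

theory Defs
  imports "HOL-Analysis.Analysis"
begin

text \<open>Nodes form a finite type 'n. The fixed digraph is an edge relation E,
  (j,i) \<in> E meaning j is a neighbour of i. Every node is its own neighbour.\<close>

definition nbrs :: "('n \<times> 'n) set \<Rightarrow> 'n \<Rightarrow> 'n set" where
  "nbrs E i = {j. (j, i) \<in> E} \<union> {i}"

definition step :: "real \<Rightarrow> real \<Rightarrow> ('n::finite \<times> 'n) set \<Rightarrow> ('n \<Rightarrow> real) \<Rightarrow> ('n \<Rightarrow> real)" where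
  "step eta alpha E x = (\<lambda>i. eta * x i + alpha * Min (x ` nbrs E i)
       + (1 - eta - alpha) * Max (x ` nbrs E i))"

text \<open>traj eta alpha E k0 x0 m is the state x(k0 + m) of the iteration started
  at time k0 with x(k0) = x0 (time-invariant graph E).\<close>
fun traj :: "(nat \<Rightarrow> real) \<Rightarrow> (nat \<Rightarrow> real) \<Rightarrow> ('n::finite \<times> 'n) set \<Rightarrow> nat
              \<Rightarrow> ('n \<Rightarrow> real) \<Rightarrow> nat \<Rightarrow> ('n \<Rightarrow> real)" where
  "traj eta alpha E k0 x0 0 = x0"
| "traj eta alpha E k0 x0 (Suc m) =
     step (eta (k0 + m)) (alpha (k0 + m)) E (traj eta alpha E k0 x0 m)"

definition in_A_ave :: "(nat \<Rightarrow> real) \<Rightarrow> (nat \<Rightarrow> real) \<Rightarrow> bool" where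
  "in_A_ave eta alpha \<longleftrightarrow> (\<forall>k. 0 < eta k \<and> eta k \<le> 1 \<and> 0 \<le> alpha k \<and> alpha k \<le> 1 - eta k)"

definition global_asym_consensus ::
  "(nat \<Rightarrow> real) \<Rightarrow> (nat \<Rightarrow> real) \<Rightarrow> ('n::finite \<times> 'n) set \<Rightarrow> bool" where
  "global_asym_consensus eta alpha E \<longleftrightarrow>
     (\<forall>k0 x0. \<exists>z. \<forall>i. (\<lambda>m. traj eta alpha E k0 x0 m i) \<longlonglongrightarrow> z)"

text \<open>Finite time consensus: some time T (\<ge> k0, i.e. T = k0 + m) at which all states coincide.\<close>
definition global_finite_consensus ::
  "(nat \<Rightarrow> real) \<Rightarrow> (nat \<Rightarrow> real) \<Rightarrow> ('n::finite \<times> 'n) set \<Rightarrow> bool" where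
  "global_finite_consensus eta alpha E \<longleftrightarrow>
     (\<forall>k0 x0. \<exists>z m. \<forall>i. traj eta alpha E k0 x0 m i = z)"

definition reachable :: "('n \<times> 'n) set \<Rightarrow> 'n \<Rightarrow> 'n \<Rightarrow> bool" where
  "reachable E i j \<longleftrightarrow> (i, j) \<in> E\<^sup>*"

definition strongly_connected :: "('n \<times> 'n) set \<Rightarrow> bool" where
  "strongly_connected E \<longleftrightarrow> (\<forall>i j. reachable E i j)"

definition quasi_strongly_connected :: "('n \<times> 'n) set \<Rightarrow> bool" where
  "quasi_strongly_connected E \<longleftrightarrow> (\<exists>c. \<forall>j. reachable E c j)"

end

theory Submission
  imports Defs
begin

(* Part (i) and the "only if" half of part (ii) rest on one observation: call a node set S
   predecessor-closed if every neighbour of a node of S lies in S again.  The new state of a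
   node of S only depends on states inside S, so if the initial state is constant on S it
   stays constant there forever, whatever the parameters eta, alpha are.
   (i)  Without a center, a finite digraph has two nodes a, b without a common ancestor
        (a center is built as a common ancestor of all nodes).  The sets of ancestors of a
        and of b are disjoint and predecessor-closed; the initial state 0 on the first and
        1 elsewhere keeps x_a = 0 and x_b = 1 forever, so there is no consensus.
   (ii, =>) If b is not reachable from a, start with 1 on the nodes reachable from a and 0
        elsewhere: the non-reachable nodes form a predecessor-closed set, so x_b stays 0,
        whereas the max protocol never decreases any state, so x_a stays at least 1.
   (ii, <=) Under the max protocol a value x0 j is at node i after n steps whenever there is
        an n-step path from j to i; with strong connectivity, after finitely many steps
        every node carries the global maximum, which it can never exceed. *)

lemma nbrs_self: "i \<in> nbrs E i"
  by (simp add: nbrs_def)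

text \<open>A node whose neighbours all hold the same value keeps that value: the update is a
  convex combination of the own state, the neighbourhood minimum and maximum.\<close>
lemma step_const_nbrs:
  fixes E :: "('n::finite \<times> 'n) set"
  assumes "\<forall>j\<in>nbrs E i. x j = c"
  shows "step eta alpha E x i = c"
proof -
  have "x ` nbrs E i = {c}" using assms nbrs_self[of i E] by force
  moreover have "x i = c" using assms nbrs_self[of i E] by blast
  ultimately show ?thesis by (simp add: step_def algebra_simps)
qed

lemma step_max: "step 0 0 (E::('n::finite \<times> 'n) set) x i = Max (x ` nbrs E i)"
  by (simp add: step_def)

lemma step_max_ge:
  fixes E :: "('n::finite \<times> 'n) set"
  assumes "j \<in> nbrs E i"
  shows "x j \<le> step 0 0 E x i"
  using assms by (simp add: step_max)

definition pred_closed :: "('n \<times> 'n) set \<Rightarrow> 'n set \<Rightarrow> bool" where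
  "pred_closed E S \<longleftrightarrow> (\<forall>i\<in>S. nbrs E i \<subseteq> S)"

lemma pred_closed_ancestors: "pred_closed E {i. reachable E i t}"
  unfolding pred_closed_def nbrs_def reachable_def
  by (auto intro: converse_rtrancl_into_rtrancl)

lemma pred_closed_unreachable: "pred_closed E {i. \<not> reachable E a i}"
  unfolding pred_closed_def nbrs_def reachable_def
  by (auto intro: rtrancl_into_rtrancl)

lemma traj_const_on_pred_closed:
  fixes E :: "('n::finite \<times> 'n) set"
  assumes "pred_closed E S" and "\<forall>i\<in>S. x0 i = c" and "i \<in> S"
  shows "traj eta alpha E k0 x0 m i = c"
  using assms(3)
proof (induction m arbitrary: i)
  case 0
  then show ?case using assms(2) by simp
next
  case (Suc m)
  have "nbrs E i \<subseteq> S" using Suc.prems assms(1) by (simp add: pred_closed_def)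
  then show ?case using Suc.IH by (simp add: step_const_nbrs subset_iff)
qed

lemma common_ancestor_finite:
  assumes pairs: "\<forall>a b. \<exists>c. reachable E c a \<and> reachable E c b" and "finite A"
  shows "\<exists>c. \<forall>j\<in>A. reachable E c j"
  using \<open>finite A\<close>
proof (induction A rule: finite_induct)
  case empty
  then show ?case by simp
next
  case (insert x A)
  then obtain c where c: "\<forall>j\<in>A. reachable E c j" by blast
  obtain d where dx: "reachable E d x" and dc: "reachable E d c" using pairs by blast
  have "reachable E d j" if "j \<in> A" for j
    using dc c that unfolding reachable_def by (meson rtrancl_trans)
  then show ?case using dx by blast
qed

lemma no_center_imp_no_common_ancestor:
  fixes E :: "('n::finite \<times> 'n) set"
  assumes "\<not> quasi_strongly_connected E"
  obtains a b where "\<And>c. \<not> (reachable E c a \<and> reachable E c b)"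
proof -
  have "\<not> (\<forall>a b. \<exists>c. reachable E c a \<and> reachable E c b)"
  proof
    assume "\<forall>a b. \<exists>c. reachable E c a \<and> reachable E c b"
    from common_ancestor_finite[OF this, of UNIV] assms show False
      by (simp add: quasi_strongly_connected_def)
  qed
  then show ?thesis using that by blast
qed

lemma asym_consensus_imp_quasi_strongly_connected:
  fixes E :: "('n::finite \<times> 'n) set"
  assumes "global_asym_consensus eta alpha E"
  shows "quasi_strongly_connected E"
proof (rule ccontr)
  assume "\<not> quasi_strongly_connected E"
  then obtain a b where disj: "\<And>c. \<not> (reachable E c a \<and> reachable E c b)"
    by (rule no_center_imp_no_common_ancestor) blast
  define x0 where "x0 = (\<lambda>i. if reachable E i a then (0::real) else 1)"
  let ?x = "\<lambda>m. traj eta alpha E 0 x0 m"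
  have self: "reachable E a a" "reachable E b b" by (simp_all add: reachable_def)
  have at_a: "?x m a = 0" for m
    by (rule traj_const_on_pred_closed[OF pred_closed_ancestors[of E a]])
       (use self in \<open>auto simp: x0_def\<close>)
  have at_b: "?x m b = 1" for m
    by (rule traj_const_on_pred_closed[OF pred_closed_ancestors[of E b]])
       (use self disj in \<open>auto simp: x0_def\<close>)
  obtain z where lim: "\<forall>i. (\<lambda>m. ?x m i) \<longlonglongrightarrow> z"
    using assms unfolding global_asym_consensus_def by blast
  have "z = 0" using lim[rule_format, of a] by (simp add: at_a LIMSEQ_const_iff)
  moreover have "z = 1" using lim[rule_format, of b] by (simp add: at_b LIMSEQ_const_iff)
  ultimately show False by simp
qed

abbreviation max_traj :: "('n::finite \<times> 'n) set \<Rightarrow> nat \<Rightarrow> ('n \<Rightarrow> real) \<Rightarrow> nat \<Rightarrow> 'n \<Rightarrow> real"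
  where "max_traj E k0 x0 \<equiv> traj (\<lambda>_. 0) (\<lambda>_. 0) E k0 x0"

text \<open>No state ever decreases, since every node is its own neighbour.\<close>
lemma max_traj_mono:
  fixes E :: "('n::finite \<times> 'n) set"
  assumes "m \<le> m'"
  shows "max_traj E k0 x0 m i \<le> max_traj E k0 x0 m' i"
  using assms
proof (induction m' rule: dec_induct)
  case (step m')
  have "max_traj E k0 x0 m' i \<le> max_traj E k0 x0 (Suc m') i"
    using step_max_ge[OF nbrs_self] by simp
  then show ?case using step.IH by linarith
qed simp

lemma max_traj_le_Max:
  fixes E :: "('n::finite \<times> 'n) set"
  shows "max_traj E k0 x0 m i \<le> Max (range x0)"
proof (induction m arbitrary: i)
  case (Suc m)
  have "nbrs E i \<noteq> {}" using nbrs_self[of i E] by blast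
  then show ?case using Suc.IH by (simp add: step_max)
qed simp

lemma max_traj_ge_along_path:
  fixes E :: "('n::finite \<times> 'n) set"
  shows "(j, i) \<in> E ^^ n \<Longrightarrow> x0 j \<le> max_traj E k0 x0 n i"
proof (induction n arbitrary: i)
  case (Suc n)
  then obtain k where "(j, k) \<in> E ^^ n" "(k, i) \<in> E" by (auto elim: relpow_Suc_E)
  then have "x0 j \<le> max_traj E k0 x0 n k" "k \<in> nbrs E i"
    using Suc.IH by (auto simp: nbrs_def)
  then show ?case using step_max_ge[of k E i "max_traj E k0 x0 n"] by simp
qed simp

lemma max_finite_consensus_imp_strongly_connected:
  fixes E :: "('n::finite \<times> 'n) set"
  assumes "global_finite_consensus (\<lambda>_. 0) (\<lambda>_. 0) E"
  shows "strongly_connected E"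
proof (rule ccontr)
  assume "\<not> strongly_connected E"
  then obtain a b where ab: "\<not> reachable E a b" by (auto simp: strongly_connected_def)
  define x0 where "x0 = (\<lambda>i. if reachable E a i then (1::real) else 0)"
  obtain z m where cons: "\<forall>i. max_traj E 0 x0 m i = z"
    using assms unfolding global_finite_consensus_def by blast
  have "max_traj E 0 x0 m b = 0"
    by (rule traj_const_on_pred_closed[OF pred_closed_unreachable[of E a]])
       (use ab in \<open>auto simp: x0_def\<close>)
  moreover have "1 \<le> max_traj E 0 x0 m a"
    using max_traj_mono[of 0 m E 0 x0 a] by (simp add: x0_def reachable_def)
  ultimately show False using cons by simp
qed

lemma strongly_connected_imp_max_finite_consensus:
  fixes E :: "('n::finite \<times> 'n) set"
  assumes sc: "strongly_connected E"
  shows "global_finite_consensus (\<lambda>_. 0) (\<lambda>_. 0) E"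
  unfolding global_finite_consensus_def
proof (intro allI)
  fix k0 :: nat and x0 :: "'n \<Rightarrow> real"
  obtain j where j: "x0 j = Max (range x0)"
    by (metis (mono_tags) Max_in UNIV_not_empty finite finite_imageI image_iff image_is_empty)
  have "\<forall>i. \<exists>n. (j, i) \<in> E ^^ n"
    using sc by (simp add: strongly_connected_def reachable_def rtrancl_power)
  then obtain len where len: "\<And>i. (j, i) \<in> E ^^ len i" by metis
  define N where "N = Max (range len)"
  have "max_traj E k0 x0 N i = Max (range x0)" for i
  proof (rule order.antisym)
    have "len i \<le> N" by (simp add: N_def)
    then have "max_traj E k0 x0 (len i) i \<le> max_traj E k0 x0 N i"
      by (rule max_traj_mono)
    moreover have "x0 j \<le> max_traj E k0 x0 (len i) i"
      by (rule max_traj_ge_along_path[OF len])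
    ultimately show "Max (range x0) \<le> max_traj E k0 x0 N i" using j by linarith
  qed (rule max_traj_le_Max)
  then show "\<exists>z m. \<forall>i. max_traj E k0 x0 m i = z" by blast
qed

theorem theorem3:
  fixes E :: "('n::finite \<times> 'n) set"
  assumes "CARD('n) \<ge> 3"
  shows "(\<forall>eta alpha. in_A_ave eta alpha \<longrightarrow> global_asym_consensus eta alpha E
            \<longrightarrow> quasi_strongly_connected E)
       \<and> (global_finite_consensus (\<lambda>_. 0) (\<lambda>_. 0) E \<longleftrightarrow> strongly_connected E)"
  using asym_consensus_imp_quasi_strongly_connected
    max_finite_consensus_imp_strongly_connected
    strongly_connected_imp_max_finite_consensus
  by blast

end
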